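(* Let $G$ be a weighted graph as in the context. For every integer $m\geq 1$, \[q_{2m}^G(\rho)\leq\frac{3h_G^{-1}(m)}{m},\] where $\rho=\rho(G)$.
   Context: $G$ is a locally finite connected graph with at least two vertices, vertex set $V(G)$ and distinguished vertex $\rho=\rho(G)$; $\mu^G$ is a symmetric weight with $\mu^G_{xy}>0$ iff $\{x,y\}$ is an edge, $\mu^G_x:=\sum_y\mu^G_{xy}$, $\nu^G(A):=\sum_{x\in A}\mu^G_x$. The discrete time simple random walk $X^G$ has transition probabilities $P_G(x,y)=\mu^G_{xy}/\mu^G_x$ and law $\mathbf{P}^G_x$; $p^G_m(x,y):=\mathbf{P}^G_x(X^G_m=y)/\nu^G(\{y\})$, $q^G_m(x,y):=\frac12(p^G_m(x,y)+p^G_{m+1}(x,y))$, $q^G_m(x):=q^G_m(\rho,x)$. The generator is $\mathcal{L}_Gf(x)=\sum_yP_G(x,y)(f(y)-f(x))$, $(f,g)_G:=\sum_xf(x)g(x)\nu^G(\{x\})$, $\mathcal{E}_G(f,g):=-(\mathcal{L}_Gf,g)_G$, $\mathcal{F}_G:=\{f:\mathcal{E}_G(f,f)<\infty\}$. The resistance metric is \[R_G(x,y):=\sup\left\{\frac{|f(x)-f(y)|^2}{\mathcal{E}_G(f,f)}:f\in\mathcal{F}_G,\ \mathcal{E}_G(f,f)>0\right\}.\] Set $V_G(r):=\nu^G(\{x:R_G(\rho,x)\le r\})$, $h_G(r):=rV_G(r)$, and $h_G^{-1}(m):=\sup\{r:h_G(r)\le m\}$. *)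

theory Defs
  imports "HOL-Analysis.Analysis"
begin

definition wgraph :: "'a set \<Rightarrow> ('a \<Rightarrow> 'a \<Rightarrow> real) \<Rightarrow> bool" where
  "wgraph V mu \<longleftrightarrow>
     (\<forall>x y. mu x y = mu y x) \<and> (\<forall>x y. 0 \<le> mu x y) \<and>
     (\<forall>x y. 0 < mu x y \<longrightarrow> x \<in> V \<and> y \<in> V) \<and>
     (\<forall>x\<in>V. finite {y. 0 < mu x y}) \<and>
     (\<forall>x\<in>V. \<forall>y\<in>V. (x, y) \<in> {(a, b). 0 < mu a b}\<^sup>*) \<and>
     (\<exists>x\<in>V. \<exists>y\<in>V. x \<noteq> y)"

definition vweight :: "('a \<Rightarrow> 'a \<Rightarrow> real) \<Rightarrow> 'a \<Rightarrow> real" where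
  "vweight mu x = (\<Sum>y\<in>{y. 0 < mu x y}. mu x y)"

definition gmeasure :: "('a \<Rightarrow> 'a \<Rightarrow> real) \<Rightarrow> 'a set \<Rightarrow> ennreal" where
  "gmeasure mu A = (\<Sum>\<^sub>\<infinity>x\<in>A. ennreal (vweight mu x))"

definition trans_prob :: "('a \<Rightarrow> 'a \<Rightarrow> real) \<Rightarrow> 'a \<Rightarrow> 'a \<Rightarrow> real" where
  "trans_prob mu x y = mu x y / vweight mu x"

primrec step_prob :: "('a \<Rightarrow> 'a \<Rightarrow> real) \<Rightarrow> nat \<Rightarrow> 'a \<Rightarrow> 'a \<Rightarrow> real" where
  "step_prob mu 0 x y = (if x = y then 1 else 0)"
| "step_prob mu (Suc n) x y = (\<Sum>z\<in>{z. 0 < mu x z}. trans_prob mu x z * step_prob mu n z y)"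

definition heat_kernel :: "('a \<Rightarrow> 'a \<Rightarrow> real) \<Rightarrow> nat \<Rightarrow> 'a \<Rightarrow> 'a \<Rightarrow> real" where
  "heat_kernel mu m x y = step_prob mu m x y / vweight mu y"

definition qkernel :: "('a \<Rightarrow> 'a \<Rightarrow> real) \<Rightarrow> nat \<Rightarrow> 'a \<Rightarrow> 'a \<Rightarrow> real" where
  "qkernel mu m x y = (heat_kernel mu m x y + heat_kernel mu (Suc m) x y) / 2"

definition energy :: "('a \<Rightarrow> 'a \<Rightarrow> real) \<Rightarrow> ('a \<Rightarrow> real) \<Rightarrow> ennreal" where
  "energy mu f = (\<Sum>\<^sub>\<infinity>p\<in>UNIV. ennreal (mu (fst p) (snd p) * (f (fst p) - f (snd p))\<^sup>2)) / 2"

definition resistance :: "('a \<Rightarrow> 'a \<Rightarrow> real) \<Rightarrow> 'a \<Rightarrow> 'a \<Rightarrow> real" where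
  "resistance mu x y = Sup {\<bar>f x - f y\<bar>\<^sup>2 / enn2real (energy mu f) | f.
       energy mu f < \<infinity> \<and> 0 < energy mu f}"

definition ball_vol :: "'a set \<Rightarrow> ('a \<Rightarrow> 'a \<Rightarrow> real) \<Rightarrow> 'a \<Rightarrow> real \<Rightarrow> ennreal" where
  "ball_vol V mu \<rho> r = gmeasure mu {x\<in>V. resistance mu \<rho> x \<le> r}"

text \<open>h_G^{-1}(t) = sup{r : r V_G(r) \<le> t} (r \<ge> 0; negative r contribute nothing)\<close>
definition h_inv :: "'a set \<Rightarrow> ('a \<Rightarrow> 'a \<Rightarrow> real) \<Rightarrow> 'a \<Rightarrow> real \<Rightarrow> real" where
  "h_inv V mu \<rho> t = Sup {r. 0 \<le> r \<and> ennreal r * ball_vol V mu \<rho> r \<le> ennreal t}"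

end

theory Submission
  imports Defs
begin

text \<open>Write \<open>p\<^sub>n = p\<^sub>n(\<rho>, \<cdot>)\<close> and \<open>P\<close> for the transition operator. Reversibility gives
  \<open>(p\<^sub>a, p\<^sub>b)\<close> = \<open>p\<^sub>a\<^sub>+\<^sub>b(\<rho>, \<rho>)\<close> and \<open>(p\<^sub>a, P p\<^sub>b)\<close> = \<open>p\<^sub>a\<^sub>+\<^sub>b\<^sub>+\<^sub>1(\<rho>, \<rho>)\<close> in \<open>L\<^sup>2(\<nu>)\<close>, so the positivity of
  \<open>I + P\<close> and \<open>I - P\<close> on finitely supported functions makes \<open>k \<mapsto> q\<^sub>2\<^sub>k(\<rho>)\<close> nonnegative,
  nonincreasing and convex, and identifies the energy of \<open>q\<^sub>2\<^sub>m(\<rho>, \<cdot>)\<close> as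
  \<open>(q\<^sub>4\<^sub>m(\<rho>) - q\<^sub>4\<^sub>m\<^sub>+\<^sub>2(\<rho>)) / 2\<close>, which convexity bounds by \<open>q\<^sub>2\<^sub>m(\<rho>) / (2m)\<close>.
  By the definition of the resistance metric, \<open>q\<^sub>2\<^sub>m(\<rho>, \<cdot>) \<ge> q\<^sub>2\<^sub>m(\<rho>) / 2\<close> on the resistance
  ball of radius \<open>r = m q\<^sub>2\<^sub>m(\<rho>) / 3\<close>; as its \<open>\<nu>\<close>-mass is at most 1, that ball has volume at
  most \<open>2 / q\<^sub>2\<^sub>m(\<rho>)\<close>. Hence \<open>h(r) \<le> 2m/3 \<le> m\<close>, i.e. \<open>r \<le> h\<^sup>-\<^sup>1(m)\<close>.\<close>

section \<open>Random walk on a weighted graph\<close>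

locale weighted_graph =
  fixes V :: "'a set" and mu :: "'a \<Rightarrow> 'a \<Rightarrow> real"
  assumes wgraph: "wgraph V mu"
begin

abbreviation nbrs :: "'a \<Rightarrow> 'a set" where "nbrs x \<equiv> {y. 0 < mu x y}"
abbreviation nu :: "'a \<Rightarrow> real" where "nu \<equiv> vweight mu"

lemma mu_sym: "mu x y = mu y x"
  using wgraph unfolding wgraph_def by blast

lemma mu_nonneg: "0 \<le> mu x y"
  using wgraph unfolding wgraph_def by blast

lemma mu_eq_0: "\<not> 0 < mu x y \<Longrightarrow> mu x y = 0"
  using mu_nonneg[of x y] by linarith

lemma edge_in_V: "0 < mu x y \<Longrightarrow> x \<in> V \<and> y \<in> V"
  using wgraph unfolding wgraph_def by blast

lemma finite_nbrs: "finite (nbrs x)"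
proof (cases "x \<in> V")
  case True
  then show ?thesis using wgraph unfolding wgraph_def by blast
next
  case False
  then have "nbrs x = {}" using edge_in_V by blast
  then show ?thesis by simp
qed

lemma vertices_connected: "x \<in> V \<Longrightarrow> y \<in> V \<Longrightarrow> (x, y) \<in> {(a, b). 0 < mu a b}\<^sup>*"
  using wgraph unfolding wgraph_def by blast

lemma other_vertex:
  obtains y where "y \<in> V" "y \<noteq> x"
  using wgraph unfolding wgraph_def by metis

lemma nu_nonneg: "0 \<le> nu x"
  unfolding vweight_def by (rule sum_nonneg) auto

lemma mu_le_nu: "0 < mu x y \<Longrightarrow> mu x y \<le> nu x"
  unfolding vweight_def by (rule member_le_sum) (auto simp: finite_nbrs)

lemma nu_pos_if_edge: "0 < mu x y \<Longrightarrow> 0 < nu x"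
  using mu_le_nu by fastforce

lemma nu_pos:
  assumes x: "x \<in> V"
  shows "0 < nu x"
proof -
  obtain y where y: "y \<in> V" "y \<noteq> x"
    by (rule other_vertex)
  from vertices_connected[OF x y(1)] y(2) obtain z where "0 < mu x z"
    by (cases rule: converse_rtranclE) auto
  then show ?thesis by (rule nu_pos_if_edge)
qed

lemma nu_trans_prob: "nu x * trans_prob mu x y = mu x y"
proof (cases "nu x = 0")
  case True
  then have "mu x y = 0" using nu_pos_if_edge mu_eq_0 by fastforce
  then show ?thesis by (simp add: trans_prob_def)
qed (simp add: trans_prob_def)

lemma trans_prob_nonneg: "0 \<le> trans_prob mu x y"
  unfolding trans_prob_def using mu_nonneg nu_nonneg by simp

lemma trans_prob_eq_0: "\<not> 0 < mu x y \<Longrightarrow> trans_prob mu x y = 0"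
  using mu_eq_0 by (simp add: trans_prob_def)

lemma sum_step_prob_le_1: "finite F \<Longrightarrow> (\<Sum>y\<in>F. step_prob mu n x y) \<le> 1"
proof (induction n arbitrary: x)
  case 0
  then show ?case by (simp add: sum.delta')
next
  case (Suc n)
  have "(\<Sum>y\<in>F. step_prob mu (Suc n) x y) = (\<Sum>z\<in>nbrs x. trans_prob mu x z * (\<Sum>y\<in>F. step_prob mu n z y))"
    by (simp add: sum_distrib_left sum.swap[of _ F])
  also have "\<dots> \<le> (\<Sum>z\<in>nbrs x. trans_prob mu x z)"
    by (rule sum_mono) (use Suc trans_prob_nonneg in \<open>auto intro: mult_left_le\<close>)
  also have "\<dots> = (\<Sum>z\<in>nbrs x. mu x z) / nu x"
    unfolding trans_prob_def by (simp add: sum_divide_distrib)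
  also have "\<dots> \<le> 1"
    unfolding vweight_def by (simp add: divide_le_eq_1)
  finally show ?case .
qed

lemma gmeasure_le_mass_bound:
  assumes c: "0 < c" and lower: "\<And>x. x \<in> A \<Longrightarrow> c \<le> f x"
    and mass: "\<And>F. finite F \<Longrightarrow> F \<subseteq> A \<Longrightarrow> (\<Sum>x\<in>F. f x * nu x) \<le> M"
  shows "gmeasure mu A \<le> ennreal (M / c)"
  unfolding gmeasure_def
proof (rule infsum_le_finite_sums)
  show "(\<lambda>x. ennreal (nu x)) summable_on A"
    by (rule nonneg_summable_on_complete) simp
  fix F assume F: "finite F" "F \<subseteq> A"
  have "c * (\<Sum>x\<in>F. nu x) \<le> (\<Sum>x\<in>F. f x * nu x)"
    unfolding sum_distrib_left
    using F lower nu_nonneg by (intro sum_mono mult_right_mono) auto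
  also have "\<dots> \<le> M" using mass[OF F] .
  finally have "(\<Sum>x\<in>F. nu x) \<le> M / c"
    using c by (simp add: pos_le_divide_eq mult.commute)
  then show "(\<Sum>x\<in>F. ennreal (nu x)) \<le> ennreal (M / c)"
    by (simp add: sum_ennreal nu_nonneg ennreal_leI)
qed

primrec reach :: "nat \<Rightarrow> 'a \<Rightarrow> 'a set" where
  "reach 0 x = {x}"
| "reach (Suc n) x = (\<Union>z\<in>nbrs x. reach n z)"

lemma finite_reach: "finite (reach n x)"
  by (induction n arbitrary: x) (auto simp: finite_nbrs)

lemma reach_subset_V: "x \<in> V \<Longrightarrow> reach n x \<subseteq> V"
  by (induction n arbitrary: x) (auto dest: edge_in_V)

lemma reach_Suc_right: "z \<in> reach n x \<Longrightarrow> 0 < mu z y \<Longrightarrow> y \<in> reach (Suc n) x"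
  by (induction n arbitrary: x) auto

lemma step_prob_nonzero_reach: "step_prob mu n x y \<noteq> 0 \<Longrightarrow> y \<in> reach n x"
proof (induction n arbitrary: x)
  case 0
  then show ?case by (auto split: if_splits)
next
  case (Suc n)
  then obtain z where "z \<in> nbrs x" "trans_prob mu x z * step_prob mu n z y \<noteq> 0"
    by (auto elim: sum.not_neutral_contains_not_neutral)
  then show ?case using Suc.IH by auto
qed

lemma step_prob_nonzero_nu_pos:
  "x \<in> V \<Longrightarrow> step_prob mu n x y \<noteq> 0 \<Longrightarrow> 0 < nu y"
  using step_prob_nonzero_reach reach_subset_V nu_pos by blast

lemma step_prob_add:
  "step_prob mu (a + b) x y = (\<Sum>z\<in>reach a x. step_prob mu a x z * step_prob mu b z y)"
proof (induction a arbitrary: x)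
  case 0
  then show ?case by simp
next
  case (Suc a)
  let ?P = "step_prob mu" and ?R = "reach (Suc a) x"
  have "?P (Suc a + b) x y = (\<Sum>z\<in>nbrs x. trans_prob mu x z * ?P (a + b) z y)"
    by simp
  also have "\<dots> = (\<Sum>z\<in>nbrs x. trans_prob mu x z * (\<Sum>w\<in>?R. ?P a z w * ?P b w y))"
  proof (rule sum.cong[OF refl])
    fix z assume "z \<in> nbrs x"
    then have "(\<Sum>w\<in>reach a z. ?P a z w * ?P b w y) = (\<Sum>w\<in>?R. ?P a z w * ?P b w y)"
      using finite_reach[of "Suc a" x]
      by (intro sum.mono_neutral_left) (auto dest: step_prob_nonzero_reach)
    then show "trans_prob mu x z * ?P (a + b) z y = trans_prob mu x z * (\<Sum>w\<in>?R. ?P a z w * ?P b w y)"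
      using Suc.IH by simp
  qed
  also have "\<dots> = (\<Sum>w\<in>?R. (\<Sum>z\<in>nbrs x. trans_prob mu x z * ?P a z w) * ?P b w y)"
    by (simp add: sum_distrib_left sum_distrib_right sum.swap[of _ "nbrs x"] mult.assoc)
  also have "\<dots> = (\<Sum>w\<in>?R. ?P (Suc a) x w * ?P b w y)"
    by simp
  finally show ?case .
qed

lemma step_prob_1: "step_prob mu (Suc 0) x y = trans_prob mu x y"
proof -
  have "step_prob mu (Suc 0) x y = (\<Sum>z\<in>nbrs x. if z = y then trans_prob mu x z else 0)"
    by (auto intro!: sum.cong)
  also have "\<dots> = trans_prob mu x y"
    using trans_prob_eq_0 by (auto simp: sum.delta' finite_nbrs)
  finally show ?thesis .
qed

lemma step_prob_Suc_right:
  "step_prob mu (Suc n) x y = (\<Sum>z\<in>reach n x. step_prob mu n x z * trans_prob mu z y)"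
  using step_prob_add[of n "Suc 0" x y] by (simp only: step_prob_1 add_Suc_right add_0_right)

lemma nu_step_prob_sym: "nu x * step_prob mu n x y = nu y * step_prob mu n y x"
proof (induction n arbitrary: x y)
  case 0
  then show ?case by simp
next
  case (Suc n)
  let ?P = "step_prob mu n"
  have "nu x * step_prob mu (Suc n) x y = (\<Sum>z\<in>nbrs x. mu x z * ?P z y)"
    by (simp add: sum_distrib_left mult.assoc[symmetric] nu_trans_prob)
  also have "\<dots> = (\<Sum>z\<in>nbrs x \<union> reach n y. mu x z * ?P z y)"
    by (rule sum.mono_neutral_left) (auto simp: finite_nbrs finite_reach mu_eq_0)
  also have "\<dots> = (\<Sum>z\<in>nbrs x \<union> reach n y. trans_prob mu z x * (nu y * ?P y z))"
    by (rule sum.cong[OF refl]) (metis Suc.IH mu_sym mult.assoc mult.commute nu_trans_prob)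
  also have "\<dots> = (\<Sum>z\<in>reach n y. trans_prob mu z x * (nu y * ?P y z))"
    by (rule sum.mono_neutral_right)
       (auto simp: finite_nbrs finite_reach dest: step_prob_nonzero_reach)
  also have "\<dots> = nu y * (\<Sum>z\<in>reach n y. ?P y z * trans_prob mu z x)"
    by (simp add: sum_distrib_left mult_ac)
  also have "\<dots> = nu y * step_prob mu (Suc n) y x"
    by (simp only: step_prob_Suc_right)
  finally show ?case .
qed

section \<open>Quadratic forms and energy\<close>

definition inner_nu :: "'a set \<Rightarrow> ('a \<Rightarrow> real) \<Rightarrow> ('a \<Rightarrow> real) \<Rightarrow> real" where
  "inner_nu T u v = (\<Sum>x\<in>T. u x * v x * nu x)"

definition adj_form :: "'a set \<Rightarrow> ('a \<Rightarrow> real) \<Rightarrow> ('a \<Rightarrow> real) \<Rightarrow> real" where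
  "adj_form T u v = (\<Sum>x\<in>T. \<Sum>y\<in>T. mu x y * u x * v y)"

text \<open>For \<open>nbhd_supported T u\<close>, \<open>inner_nu T u u\<close> and \<open>adj_form T u u\<close> are the
  \<open>L\<^sup>2(\<nu>)\<close> products \<open>(u, u)\<close> and \<open>(u, P u)\<close>; \<open>T\<close> is only a finite domain of summation.\<close>

definition nbhd_supported :: "'a set \<Rightarrow> ('a \<Rightarrow> real) \<Rightarrow> bool" where
  "nbhd_supported T u \<longleftrightarrow> (\<forall>x. u x \<noteq> 0 \<longrightarrow> x \<in> T \<and> nbrs x \<subseteq> T)"

lemma inner_nu_adj_form_squares:
  assumes T: "finite T" and u: "nbhd_supported T u"
  shows "inner_nu T u u - adj_form T u u = (\<Sum>x\<in>T. \<Sum>y\<in>T. mu x y * (u x - u y)\<^sup>2) / 2"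
    and "inner_nu T u u + adj_form T u u = (\<Sum>x\<in>T. \<Sum>y\<in>T. mu x y * (u x + u y)\<^sup>2) / 2"
proof -
  have left: "inner_nu T u u = (\<Sum>x\<in>T. \<Sum>y\<in>T. mu x y * (u x)\<^sup>2)"
    unfolding inner_nu_def
  proof (rule sum.cong[OF refl])
    fix x
    show "u x * u x * nu x = (\<Sum>y\<in>T. mu x y * (u x)\<^sup>2)"
    proof (cases "u x = 0")
      case False
      then have "nu x = (\<Sum>y\<in>T. mu x y)"
        using u unfolding vweight_def nbhd_supported_def
        by (intro sum.mono_neutral_left) (auto simp: T mu_eq_0)
      then show ?thesis by (simp add: sum_distrib_left power2_eq_square mult_ac)
    qed simp
  qed
  have right: "(\<Sum>x\<in>T. \<Sum>y\<in>T. mu x y * (u y)\<^sup>2) = inner_nu T u u"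
    unfolding left by (subst sum.swap) (simp add: mu_sym)
  have "(\<Sum>x\<in>T. \<Sum>y\<in>T. mu x y * (u x - u y)\<^sup>2) =
      (\<Sum>x\<in>T. \<Sum>y\<in>T. mu x y * (u x)\<^sup>2) + (\<Sum>x\<in>T. \<Sum>y\<in>T. mu x y * (u y)\<^sup>2)
      - 2 * adj_form T u u"
    unfolding adj_form_def
    by (simp add: sum.distrib sum_subtractf sum_distrib_left power2_diff algebra_simps)
  then show "inner_nu T u u - adj_form T u u = (\<Sum>x\<in>T. \<Sum>y\<in>T. mu x y * (u x - u y)\<^sup>2) / 2"
    using left right by simp
  have "(\<Sum>x\<in>T. \<Sum>y\<in>T. mu x y * (u x + u y)\<^sup>2) =
      (\<Sum>x\<in>T. \<Sum>y\<in>T. mu x y * (u x)\<^sup>2) + (\<Sum>x\<in>T. \<Sum>y\<in>T. mu x y * (u y)\<^sup>2)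
      + 2 * adj_form T u u"
    unfolding adj_form_def
    by (simp add: sum.distrib sum_distrib_left power2_sum algebra_simps)
  then show "inner_nu T u u + adj_form T u u = (\<Sum>x\<in>T. \<Sum>y\<in>T. mu x y * (u x + u y)\<^sup>2) / 2"
    using left right by simp
qed

lemma adj_form_le_inner_nu:
  "finite T \<Longrightarrow> nbhd_supported T u \<Longrightarrow> adj_form T u u \<le> inner_nu T u u"
  using inner_nu_adj_form_squares(1)[of T u]
  by (smt (verit) divide_nonneg_pos mu_nonneg mult_nonneg_nonneg sum_nonneg zero_le_power2)

lemma neg_adj_form_le_inner_nu:
  "finite T \<Longrightarrow> nbhd_supported T u \<Longrightarrow> - adj_form T u u \<le> inner_nu T u u"
  using inner_nu_adj_form_squares(2)[of T u]
  by (smt (verit) divide_nonneg_pos mu_nonneg mult_nonneg_nonneg sum_nonneg zero_le_power2)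

lemma energy_eq_forms:
  assumes T: "finite T" and u: "nbhd_supported T u"
  shows "energy mu u = ennreal (inner_nu T u u - adj_form T u u)"
proof -
  let ?h = "\<lambda>p. ennreal (mu (fst p) (snd p) * (u (fst p) - u (snd p))\<^sup>2)"
  have "infsum ?h UNIV = infsum ?h (T \<times> T)"
  proof (rule infsum_cong_neutral)
    fix p assume p: "p \<in> UNIV - T \<times> T"
    obtain x y where xy: "p = (x, y)" by force
    show "?h p = 0"
    proof (cases "0 < mu x y")
      case True
      moreover have "0 < mu y x" using True mu_sym[of x y] by simp
      ultimately have "u x = 0" and "u y = 0"
        using u p xy unfolding nbhd_supported_def by blast+
      then show ?thesis using xy by simp
    next
      case False
      then show ?thesis using xy mu_eq_0 by simp
    qed
  qed auto
  also have "\<dots> = ennreal (\<Sum>p\<in>T \<times> T. mu (fst p) (snd p) * (u (fst p) - u (snd p))\<^sup>2)"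
    using T by (simp add: sum_ennreal mu_nonneg)
  also have "(\<Sum>p\<in>T \<times> T. mu (fst p) (snd p) * (u (fst p) - u (snd p))\<^sup>2)
      = (\<Sum>x\<in>T. \<Sum>y\<in>T. mu x y * (u x - u y)\<^sup>2)"
    by (simp add: sum.cartesian_product split_def)
  finally have "energy mu u = ennreal (\<Sum>x\<in>T. \<Sum>y\<in>T. mu x y * (u x - u y)\<^sup>2) / 2"
    unfolding energy_def by simp
  also have "\<dots> = ennreal (inner_nu T u u - adj_form T u u)"
    unfolding inner_nu_adj_form_squares(1)[OF T u]
    using divide_ennreal[of _ 2] by (simp add: sum_nonneg mu_nonneg)
  finally show ?thesis .
qed

section \<open>Resistance\<close>

lemma edge_le_energy:
  assumes "energy mu g < \<infinity>"
  shows "mu x y * (g x - g y)\<^sup>2 \<le> enn2real (energy mu g)"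
proof (cases "x = y")
  case False
  let ?h = "\<lambda>p. ennreal (mu (fst p) (snd p) * (g (fst p) - g (snd p))\<^sup>2)"
  define t where "t = mu x y * (g x - g y)\<^sup>2"
  have t: "0 \<le> t" unfolding t_def by (simp add: mu_nonneg)
  have "ennreal t * 2 = infsum ?h {(x, y), (y, x)}"
    using False unfolding t_def by (simp add: mu_sym[of x y] power2_commute mult_2_right)
  also have "\<dots> \<le> infsum ?h UNIV"
    by (rule infsum_mono_neutral) (auto intro: nonneg_summable_on_complete)
  finally have "(ennreal t * 2) / 2 \<le> energy mu g"
    unfolding energy_def by (rule divide_right_mono_ennreal)
  then have "ennreal t \<le> energy mu g"
    by (subst (asm) mult_divide_eq_ennreal) auto
  then have "enn2real (ennreal t) \<le> enn2real (energy mu g)"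
    using assms by (intro enn2real_mono) auto
  then show ?thesis
    using t unfolding t_def by simp
qed simp

lemma sq_diff_le_const_energy:
  assumes "x \<in> V" "y \<in> V"
  obtains C where "\<And>g. energy mu g < \<infinity> \<Longrightarrow> (g x - g y)\<^sup>2 \<le> C * enn2real (energy mu g)"
proof -
  from vertices_connected[OF assms]
  have "\<exists>C. \<forall>g. energy mu g < \<infinity> \<longrightarrow> (g x - g y)\<^sup>2 \<le> C * enn2real (energy mu g)"
  proof (induction rule: rtrancl_induct)
    case base
    show ?case by (intro exI[of _ 0]) simp
  next
    case (step z w)
    then obtain C where C: "\<And>g. energy mu g < \<infinity> \<Longrightarrow> (g x - g z)\<^sup>2 \<le> C * enn2real (energy mu g)"
      by blast
    have zw: "0 < mu z w" using step by simp
    show ?case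
    proof (intro exI[of _ "2 * C + 2 / mu z w"] allI impI)
      fix g assume g: "energy mu g < \<infinity>"
      define E where "E = enn2real (energy mu g)"
      have "mu z w * (g z - g w)\<^sup>2 \<le> E"
        unfolding E_def by (rule edge_le_energy[OF g])
      then have edge: "(g z - g w)\<^sup>2 \<le> E / mu z w"
        using zw by (simp add: pos_le_divide_eq mult.commute)
      have "(g x - g w)\<^sup>2 \<le> 2 * (g x - g z)\<^sup>2 + 2 * (g z - g w)\<^sup>2"
        using zero_le_power2[of "(g x - g z) - (g z - g w)"]
        by (simp add: power2_eq_square algebra_simps)
      also have "\<dots> \<le> (2 * C + 2 / mu z w) * E"
        using C[OF g] edge unfolding E_def by (simp add: algebra_simps)
      finally show "(g x - g w)\<^sup>2 \<le> (2 * C + 2 / mu z w) * enn2real (energy mu g)"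
        unfolding E_def .
    qed
  qed
  then show ?thesis using that by blast
qed

lemma sq_diff_le_resistance_energy:
  assumes x: "x \<in> V" and y: "y \<in> V" and g: "energy mu g < \<infinity>"
  shows "(g x - g y)\<^sup>2 \<le> resistance mu x y * enn2real (energy mu g)"
proof -
  obtain C where C: "\<And>f. energy mu f < \<infinity> \<Longrightarrow> (f x - f y)\<^sup>2 \<le> C * enn2real (energy mu f)"
    using sq_diff_le_const_energy[OF x y] by blast
  let ?S = "{\<bar>f x - f y\<bar>\<^sup>2 / enn2real (energy mu f) |f. energy mu f < \<infinity> \<and> 0 < energy mu f}"
  show ?thesis
  proof (cases "energy mu g = 0")
    case True
    then show ?thesis using C[OF g] by simp
  next
    case False
    then have E: "0 < enn2real (energy mu g)"
      using g by (simp add: enn2real_positive_iff zero_less_iff_neq_zero)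
    have "bdd_above ?S"
    proof (rule bdd_aboveI)
      fix t assume "t \<in> ?S"
      then obtain f where f: "t = (f x - f y)\<^sup>2 / enn2real (energy mu f)"
        "energy mu f < \<infinity>" "0 < energy mu f"
        by auto
      then have "0 < enn2real (energy mu f)" by (simp add: enn2real_positive_iff)
      then show "t \<le> C" using C[OF f(2)] f(1) by (simp add: divide_le_eq mult.commute)
    qed
    moreover have "(g x - g y)\<^sup>2 / enn2real (energy mu g) \<in> ?S"
      using g False by (auto simp: zero_less_iff_neq_zero)
    ultimately have "(g x - g y)\<^sup>2 / enn2real (energy mu g) \<le> resistance mu x y"
      unfolding resistance_def by (rule cSup_upper[rotated])
    then show ?thesis using E by (simp add: divide_le_eq)
  qed
qed

lemma resistance_refl:
  assumes x: "x \<in> V"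
  shows "resistance mu x x = 0"
proof -
  define g where "g = (\<lambda>z. if z = x then 1 else (0::real))"
  have "nbhd_supported (insert x (nbrs x)) g"
    unfolding nbhd_supported_def g_def by auto
  then have fin: "energy mu g < \<infinity>"
    using energy_eq_forms[of "insert x (nbrs x)" g] by (simp add: finite_nbrs)
  obtain y where y: "y \<in> V" "y \<noteq> x"
    by (rule other_vertex)
  obtain C where "(g x - g y)\<^sup>2 \<le> C * enn2real (energy mu g)"
    using sq_diff_le_const_energy[OF x y(1)] fin by blast
  then have "energy mu g \<noteq> 0" using y(2) by (auto simp: g_def)
  then have "{\<bar>f x - f x\<bar>\<^sup>2 / enn2real (energy mu f) |f. energy mu f < \<infinity> \<and> 0 < energy mu f} = {0}"
    using fin by (auto simp: zero_less_iff_neq_zero)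
  then show ?thesis unfolding resistance_def by simp
qed

end

section \<open>Heat kernel at the root\<close>

locale rooted_graph = weighted_graph +
  fixes rho :: 'a
  assumes rho_in_V: "rho \<in> V"
begin

definition hk :: "nat \<Rightarrow> 'a \<Rightarrow> real" where
  "hk n x = heat_kernel mu n rho x"

definition ret :: "nat \<Rightarrow> real" where
  "ret n = hk n rho"

definition qret :: "nat \<Rightarrow> real" where
  "qret k = qkernel mu (2 * k) rho rho"

definition walk_ball :: "nat \<Rightarrow> 'a set" where
  "walk_ball n = (\<Union>j\<le>n. reach j rho)"

lemma finite_walk_ball: "finite (walk_ball n)"
  unfolding walk_ball_def by (auto simp: finite_reach)

lemma reach_subset_walk_ball: "a \<le> n \<Longrightarrow> reach a rho \<subseteq> walk_ball n"
  unfolding walk_ball_def by auto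

lemma walk_ball_mono: "walk_ball n \<subseteq> walk_ball (Suc n)"
  unfolding walk_ball_def atMost_Suc by auto

lemma nbrs_subset_walk_ball: "x \<in> walk_ball n \<Longrightarrow> nbrs x \<subseteq> walk_ball (Suc n)"
  unfolding walk_ball_def using reach_Suc_right by fastforce

lemma hk_nonzero_reach: "hk n x \<noteq> 0 \<Longrightarrow> x \<in> reach n rho"
  using step_prob_nonzero_reach by (fastforce simp: hk_def heat_kernel_def)

lemma hk_nu: "hk n x * nu x = step_prob mu n rho x"
proof (cases "nu x = 0")
  case True
  then have "step_prob mu n rho x = 0"
    using step_prob_nonzero_nu_pos[OF rho_in_V] by fastforce
  then show ?thesis using True by simp
qed (simp add: hk_def heat_kernel_def)

lemma hk_reverse: "0 < nu x \<Longrightarrow> hk n x = step_prob mu n x rho / nu rho"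
  using nu_step_prob_sym[of x n rho] nu_pos[OF rho_in_V]
  by (simp add: hk_def heat_kernel_def field_simps)

lemma inner_nu_hk:
  assumes "a \<le> n"
  shows "inner_nu (walk_ball n) (hk a) (hk b) = ret (a + b)"
proof -
  let ?P = "step_prob mu"
  have "inner_nu (walk_ball n) (hk a) (hk b) = (\<Sum>x\<in>walk_ball n. ?P a rho x * ?P b x rho / nu rho)"
    unfolding inner_nu_def
  proof (rule sum.cong[OF refl])
    fix x
    show "hk a x * hk b x * nu x = ?P a rho x * ?P b x rho / nu rho"
    proof (cases "0 < nu x")
      case True
      then show ?thesis using hk_nu[of a x] hk_reverse[of x b] by (simp add: mult_ac)
    next
      case False
      then have "?P a rho x = 0" using step_prob_nonzero_nu_pos[OF rho_in_V] by blast
      then show ?thesis using hk_nu[of a x] by auto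
    qed
  qed
  also have "\<dots> = (\<Sum>x\<in>reach a rho. ?P a rho x * ?P b x rho / nu rho)"
    using reach_subset_walk_ball[OF assms] finite_walk_ball
    by (intro sum.mono_neutral_right) (auto dest: step_prob_nonzero_reach)
  also have "\<dots> = ret (a + b)"
    by (simp add: ret_def hk_def heat_kernel_def step_prob_add sum_divide_distrib)
  finally show ?thesis .
qed

lemma sum_nbrs_hk: "(\<Sum>y\<in>nbrs x. mu x y * hk n y) = nu x * hk (Suc n) x"
proof (cases "0 < nu x")
  case False
  then have "nbrs x = {}" using nu_pos_if_edge by blast
  then show ?thesis using False nu_nonneg[of x] by simp
next
  case True
  have "(\<Sum>y\<in>nbrs x. mu x y * hk n y) = (\<Sum>y\<in>nbrs x. nu x * trans_prob mu x y * step_prob mu n y rho) / nu rho"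
    unfolding sum_divide_distrib
  proof (rule sum.cong[OF refl])
    fix y assume "y \<in> nbrs x"
    then have "0 < nu y" using nu_pos_if_edge mu_sym by fastforce
    then show "mu x y * hk n y = nu x * trans_prob mu x y * step_prob mu n y rho / nu rho"
      by (simp add: hk_reverse nu_trans_prob)
  qed
  also have "\<dots> = nu x * step_prob mu (Suc n) x rho / nu rho"
    by (simp add: sum_distrib_left mult.assoc)
  also have "\<dots> = nu x * hk (Suc n) x"
    using True by (simp add: hk_reverse)
  finally show ?thesis .
qed

lemma adj_form_hk:
  assumes a: "a \<le> n"
  shows "adj_form (walk_ball (Suc n)) (hk a) (hk b) = ret (a + Suc b)"
proof -
  let ?T = "walk_ball (Suc n)"
  have "adj_form ?T (hk a) (hk b) = inner_nu ?T (hk a) (hk (Suc b))"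
    unfolding adj_form_def inner_nu_def
  proof (rule sum.cong[OF refl])
    fix x
    show "(\<Sum>y\<in>?T. mu x y * hk a x * hk b y) = hk a x * hk (Suc b) x * nu x"
    proof (cases "hk a x = 0")
      case False
      then have "nbrs x \<subseteq> ?T"
        using hk_nonzero_reach reach_subset_walk_ball[OF a] nbrs_subset_walk_ball by blast
      then have "(\<Sum>y\<in>?T. mu x y * hk b y) = (\<Sum>y\<in>nbrs x. mu x y * hk b y)"
        by (intro sum.mono_neutral_right) (auto simp: finite_walk_ball mu_eq_0)
      moreover have "(\<Sum>y\<in>?T. mu x y * hk a x * hk b y) = hk a x * (\<Sum>y\<in>?T. mu x y * hk b y)"
        by (simp add: sum_distrib_left mult_ac)
      ultimately show ?thesis
        by (simp add: sum_nbrs_hk mult_ac)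
    qed simp
  qed
  also have "\<dots> = ret (a + Suc b)"
    using a by (intro inner_nu_hk) simp
  finally show ?thesis .
qed

lemma forms_hk_combination:
  fixes \<alpha> \<beta> :: real
  assumes ab: "a \<le> n" "b \<le> n" and u: "\<And>x. u x = \<alpha> * hk a x + \<beta> * hk b x"
  shows "inner_nu (walk_ball (Suc n)) u u
      = \<alpha>\<^sup>2 * ret (a + a) + 2 * \<alpha> * \<beta> * ret (a + b) + \<beta>\<^sup>2 * ret (b + b)"
    and "adj_form (walk_ball (Suc n)) u u
      = \<alpha>\<^sup>2 * ret (Suc (a + a)) + 2 * \<alpha> * \<beta> * ret (Suc (a + b)) + \<beta>\<^sup>2 * ret (Suc (b + b))"
    and "nbhd_supported (walk_ball (Suc n)) u"
proof -
  let ?T = "walk_ball (Suc n)"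
  have "inner_nu ?T u u = \<alpha>\<^sup>2 * inner_nu ?T (hk a) (hk a) + 2 * \<alpha> * \<beta> * inner_nu ?T (hk a) (hk b)
      + \<beta>\<^sup>2 * inner_nu ?T (hk b) (hk b)"
    unfolding inner_nu_def u
    by (simp add: sum.distrib sum_distrib_left power2_eq_square algebra_simps)
  then show "inner_nu ?T u u = \<alpha>\<^sup>2 * ret (a + a) + 2 * \<alpha> * \<beta> * ret (a + b) + \<beta>\<^sup>2 * ret (b + b)"
    using ab by (simp add: inner_nu_hk)
  have "adj_form ?T u u = \<alpha>\<^sup>2 * adj_form ?T (hk a) (hk a) + \<alpha> * \<beta> * adj_form ?T (hk a) (hk b)
      + \<beta> * \<alpha> * adj_form ?T (hk b) (hk a) + \<beta>\<^sup>2 * adj_form ?T (hk b) (hk b)"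
    unfolding adj_form_def u
    by (simp add: sum.distrib sum_distrib_left power2_eq_square algebra_simps)
  then show "adj_form ?T u u
      = \<alpha>\<^sup>2 * ret (Suc (a + a)) + 2 * \<alpha> * \<beta> * ret (Suc (a + b)) + \<beta>\<^sup>2 * ret (Suc (b + b))"
    using ab by (simp add: adj_form_hk algebra_simps)
  have "x \<in> walk_ball n" if "u x \<noteq> 0" for x
  proof -
    have "hk a x \<noteq> 0 \<or> hk b x \<noteq> 0" using that unfolding u by auto
    then show ?thesis using ab hk_nonzero_reach reach_subset_walk_ball by blast
  qed
  then show "nbhd_supported ?T u"
    unfolding nbhd_supported_def using walk_ball_mono nbrs_subset_walk_ball by blast
qed

lemma qret_eq: "qret k = (ret (k + k) + ret (Suc (k + k))) / 2"
  by (simp add: qret_def qkernel_def ret_def hk_def mult_2)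

lemma qret_nonneg: "0 \<le> qret k"
proof -
  let ?T = "walk_ball (Suc k)"
  have u: "hk k x = 1 * hk k x + 0 * hk k x" for x
    by simp
  note forms = forms_hk_combination[OF order.refl order.refl u]
  have "- adj_form ?T (hk k) (hk k) \<le> inner_nu ?T (hk k) (hk k)"
    by (rule neg_adj_form_le_inner_nu[OF finite_walk_ball forms(3)])
  then show ?thesis
    unfolding forms(1,2) qret_eq by simp
qed

text \<open>Convexity of \<open>qret\<close>: the positivity of \<open>I + P\<close> applied to \<open>hk k - hk (k + 2)\<close>.\<close>

lemma qret_diff_antimono: "qret (Suc k) - qret (Suc (Suc k)) \<le> qret k - qret (Suc k)"
proof -
  define u where "u x = hk k x - hk (Suc (Suc k)) x" for x
  let ?T = "walk_ball (Suc (Suc (Suc k)))"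
  have u: "u x = 1 * hk k x + (- 1) * hk (Suc (Suc k)) x" for x
    by (simp add: u_def)
  have "k \<le> Suc (Suc k)" by simp
  note forms = forms_hk_combination[OF this order.refl u]
  have "- adj_form ?T u u \<le> inner_nu ?T u u"
    by (rule neg_adj_form_le_inner_nu[OF finite_walk_ball forms(3)])
  then show ?thesis
    unfolding forms(1,2) qret_eq by (simp add: field_simps)
qed

lemma qkernel_forms:
  shows "inner_nu (walk_ball (Suc (Suc n))) (qkernel mu n rho) (qkernel mu n rho)
      - adj_form (walk_ball (Suc (Suc n))) (qkernel mu n rho) (qkernel mu n rho)
      = (qret n - qret (Suc n)) / 2"
    and "nbhd_supported (walk_ball (Suc (Suc n))) (qkernel mu n rho)"
proof -
  have u: "qkernel mu n rho x = 1/2 * hk n x + 1/2 * hk (Suc n) x" for x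
    by (simp add: qkernel_def hk_def)
  note forms = forms_hk_combination[OF le_SucI[OF order.refl] order.refl u]
  show "nbhd_supported (walk_ball (Suc (Suc n))) (qkernel mu n rho)"
    by (rule forms(3))
  show "inner_nu (walk_ball (Suc (Suc n))) (qkernel mu n rho) (qkernel mu n rho)
      - adj_form (walk_ball (Suc (Suc n))) (qkernel mu n rho) (qkernel mu n rho)
      = (qret n - qret (Suc n)) / 2"
    unfolding forms(1,2) qret_eq by (simp add: power2_eq_square field_simps)
qed

lemma qret_Suc_le: "qret (Suc n) \<le> qret n"
  using adj_form_le_inner_nu[OF finite_walk_ball qkernel_forms(2), of n] qkernel_forms(1)[of n]
  by simp

lemma energy_qkernel: "energy mu (qkernel mu n rho) = ennreal ((qret n - qret (Suc n)) / 2)"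
  using energy_eq_forms[OF finite_walk_ball qkernel_forms(2)] by (simp add: qkernel_forms(1))

lemma qret_diff_le: "real m * (qret (2 * m) - qret (Suc (2 * m))) \<le> qret m"
proof -
  define \<delta> where "\<delta> j = qret j - qret (Suc j)" for j
  have "real m * \<delta> (2 * m) = (\<Sum>j=m..<2 * m. \<delta> (2 * m))"
    by simp
  also have "\<dots> \<le> (\<Sum>j=m..<2 * m. \<delta> j)"
    using lift_Suc_antimono_le[of \<delta>] qret_diff_antimono
    by (intro sum_mono) (auto simp: \<delta>_def)
  also have "\<dots> = qret m - qret (2 * m)"
    using sum_Suc_diff'[of m "2 * m" "\<lambda>j. - qret j"] by (simp add: \<delta>_def)
  also have "\<dots> \<le> qret m"
    using qret_nonneg by simp
  finally show ?thesis
    unfolding \<delta>_def .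
qed

lemma energy_qkernel_le:
  assumes "1 \<le> m"
  shows "enn2real (energy mu (qkernel mu (2 * m) rho)) \<le> qret m / (2 * real m)"
proof -
  have "enn2real (energy mu (qkernel mu (2 * m) rho)) = (qret (2 * m) - qret (Suc (2 * m))) / 2"
    using qret_Suc_le[of "2 * m"] by (simp add: energy_qkernel)
  then show ?thesis
    using qret_diff_le[of m] assms by (simp add: pos_le_divide_eq mult_ac)
qed

lemma sum_qkernel_nu_le_1:
  assumes F: "finite F"
  shows "(\<Sum>x\<in>F. qkernel mu n rho x * nu x) \<le> 1"
proof -
  have "qkernel mu n rho x * nu x = (step_prob mu n rho x + step_prob mu (Suc n) rho x) / 2" for x
    using hk_nu[of n x] hk_nu[of "Suc n" x]
    by (simp add: qkernel_def hk_def add_divide_distrib distrib_right)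
  then have "(\<Sum>x\<in>F. qkernel mu n rho x * nu x)
      = ((\<Sum>x\<in>F. step_prob mu n rho x) + (\<Sum>x\<in>F. step_prob mu (Suc n) rho x)) / 2"
    by (simp only: sum.distrib flip: sum_divide_distrib)
  then show ?thesis
    using sum_step_prob_le_1[OF F, of n rho] sum_step_prob_le_1[OF F, of "Suc n" rho] by simp
qed

lemma qkernel_ge_half_on_ball:
  assumes m: "1 \<le> m" and q: "0 < qret m"
    and x: "x \<in> V" "resistance mu rho x \<le> real m * qret m / 3"
  shows "qret m / 2 \<le> qkernel mu (2 * m) rho x"
proof -
  define u where "u = qkernel mu (2 * m) rho"
  have fin: "energy mu u < \<infinity>"
    by (simp add: u_def energy_qkernel)
  have E: "enn2real (energy mu u) \<le> qret m / (2 * real m)"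
    unfolding u_def using energy_qkernel_le[OF m] .
  have "(u rho - u x)\<^sup>2 \<le> resistance mu rho x * enn2real (energy mu u)"
    by (rule sq_diff_le_resistance_energy[OF rho_in_V x(1) fin])
  also have "\<dots> \<le> real m * qret m / 3 * (qret m / (2 * real m))"
    using q by (intro mult_mono[OF x(2) E]) simp_all
  also have "\<dots> = qret m * qret m / 6"
    using m by (simp add: field_simps)
  also have "\<dots> \<le> (qret m / 2)\<^sup>2"
    by (simp add: power2_eq_square)
  finally have "(qret m - u x)\<^sup>2 \<le> (qret m / 2)\<^sup>2"
    by (simp add: u_def qret_def)
  then have "qret m - u x \<le> qret m / 2"
    by (rule power2_le_imp_le) (use q in simp)
  then show ?thesis
    by (simp add: u_def)
qed

lemma ball_vol_qret_le:
  assumes m: "1 \<le> m" and q: "0 < qret m"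
  shows "ball_vol V mu rho (real m * qret m / 3) \<le> ennreal (2 / qret m)"
proof -
  have "ball_vol V mu rho (real m * qret m / 3) \<le> ennreal (1 / (qret m / 2))"
    unfolding ball_vol_def
  proof (rule gmeasure_le_mass_bound)
    show "0 < qret m / 2"
      using q by simp
    show "qret m / 2 \<le> qkernel mu (2 * m) rho x"
      if "x \<in> {x \<in> V. resistance mu rho x \<le> real m * qret m / 3}" for x
      using that qkernel_ge_half_on_ball[OF m q] by blast
    show "(\<Sum>x\<in>F. qkernel mu (2 * m) rho x * nu x) \<le> 1" if "finite F" for F
      using that by (rule sum_qkernel_nu_le_1)
  qed
  then show ?thesis
    by simp
qed

lemma le_h_inv:
  assumes r: "0 \<le> r" and t: "0 \<le> t" and vol: "ennreal r * ball_vol V mu rho r \<le> ennreal t"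
  shows "r \<le> h_inv V mu rho t"
  unfolding h_inv_def
proof (rule cSup_upper)
  show "r \<in> {r. 0 \<le> r \<and> ennreal r * ball_vol V mu rho r \<le> ennreal t}"
    using r vol by simp
  show "bdd_above {r. 0 \<le> r \<and> ennreal r * ball_vol V mu rho r \<le> ennreal t}"
  proof (rule bdd_aboveI[where M = "t / nu rho"])
    fix s assume "s \<in> {r. 0 \<le> r \<and> ennreal r * ball_vol V mu rho r \<le> ennreal t}"
    then have s: "0 \<le> s" "ennreal s * ball_vol V mu rho s \<le> ennreal t" by auto
    have "ennreal (nu rho) = (\<Sum>\<^sub>\<infinity>x\<in>{rho}. ennreal (nu x))"
      by simp
    also have "\<dots> \<le> ball_vol V mu rho s"
      unfolding ball_vol_def gmeasure_def
      using rho_in_V resistance_refl[OF rho_in_V] s(1)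
      by (intro infsum_mono_neutral) (auto intro: nonneg_summable_on_complete)
    finally have "ennreal (s * nu rho) \<le> ennreal t"
      using s by (metis ennreal_mult' mult_left_mono order_trans zero_le)
    then have "s * nu rho \<le> t"
      using t by (simp add: ennreal_le_iff)
    then show "s \<le> t / nu rho"
      using nu_pos[OF rho_in_V] by (simp add: pos_le_divide_eq)
  qed
qed

end

theorem lemma4p3:
  fixes V :: "'a set" and mu :: "'a \<Rightarrow> 'a \<Rightarrow> real" and \<rho> :: 'a and m :: nat
  assumes "wgraph V mu" and "\<rho> \<in> V" and "1 \<le> m"
  shows "qkernel mu (2 * m) \<rho> \<rho> \<le> 3 * h_inv V mu \<rho> (real m) / real m"
proof -
  interpret rooted_graph V mu \<rho>
    using assms(1,2) by unfold_locales
  define q where "q = qret m"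
  define r where "r = real m * q / 3"
  have "ennreal r * ball_vol V mu \<rho> r \<le> ennreal (real m)"
  proof (cases "q = 0")
    case False
    then have q: "0 < q" using qret_nonneg[of m] by (simp add: q_def)
    have "ennreal r * ball_vol V mu \<rho> r \<le> ennreal r * ennreal (2 / q)"
      using ball_vol_qret_le[OF assms(3)] q by (intro mult_left_mono) (auto simp: r_def q_def)
    also have "\<dots> = ennreal (2 * real m / 3)"
      using q by (simp add: r_def ennreal_mult'[symmetric] field_simps)
    also have "\<dots> \<le> ennreal (real m)"
      by (intro ennreal_leI) simp
    finally show ?thesis .
  qed (simp add: r_def)
  then have "r \<le> h_inv V mu \<rho> (real m)"
    using qret_nonneg[of m] by (intro le_h_inv) (auto simp: r_def q_def)
  then show ?thesis
    using assms(3) by (simp add: r_def q_def qret_def field_simps)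
qed

end
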